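(* Let $d=p\geq 2$ be a prime number and let $\varGamma$ be a lattice in $\mathbb{R}^p$. Then the factor group $\operatorname{SOS}(\varGamma)/\operatorname{SOC}(\varGamma)$ is an elementary Abelian $p$-group, i.e., it is the direct sum of cyclic groups of order $p$.
   Context: A lattice in $\mathbb{R}^d$ is a subgroup of the form $\mathbb{Z}b_1\oplus\cdots\oplus\mathbb{Z}b_d$ where $\{b_1,\dots,b_d\}$ is a basis of $\mathbb{R}^d$. Two lattices $\varGamma,\varGamma'$ are commensurate, written $\varGamma\sim\varGamma'$, if $\varGamma\cap\varGamma'$ has finite index both in $\varGamma$ and in $\varGamma'$. $\operatorname{SOC}(\varGamma)=\{R\in\operatorname{SO}(d):\varGamma\sim R\varGamma\}$ and $\operatorname{SOS}(\varGamma)=\{R\in\operatorname{SO}(d):\varGamma\sim\alpha R\varGamma\text{ for some }\alpha>0\}$; these are groups and $\operatorname{SOC}(\varGamma)$ is a normal subgroup of $\operatorname{SOS}(\varGamma)$. Here the direct sum is allowed to be trivial (empty). *)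

theory Defs
  imports "HOL-Analysis.Analysis" "HOL-Algebra.Coset"
begin

definition is_lattice :: "(real^'n) set \<Rightarrow> bool" where
  "is_lattice L \<longleftrightarrow> (\<exists>B :: real^'n^'n. invertible B \<and>
      L = range (\<lambda>z :: int^'n. B *v (\<chi> i. real_of_int (z $ i))))"

definition finite_index :: "(real^'n) set \<Rightarrow> (real^'n) set \<Rightarrow> bool" where
  "finite_index H A \<longleftrightarrow> finite ((\<lambda>x. (\<lambda>h. x + h) ` H) ` A)"

definition commensurate :: "(real^'n) set \<Rightarrow> (real^'n) set \<Rightarrow> bool" where
  "commensurate L L' \<longleftrightarrow> finite_index (L \<inter> L') L \<and> finite_index (L \<inter> L') L'"

definition SO :: "(real^'n^'n) set" where
  "SO = {R. orthogonal_matrix R \<and> det R = 1}"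

definition SOC :: "(real^'n) set \<Rightarrow> (real^'n^'n) set" where
  "SOC L = {R \<in> SO. commensurate L ((\<lambda>x. R *v x) ` L)}"

definition SOS :: "(real^'n) set \<Rightarrow> (real^'n^'n) set" where
  "SOS L = {R \<in> SO. \<exists>\<alpha>>0. commensurate L ((\<lambda>x. \<alpha> *\<^sub>R (R *v x)) ` L)}"

definition SOS_group :: "(real^'n) set \<Rightarrow> (real^'n^'n) monoid" where
  "SOS_group L = \<lparr>carrier = SOS L, mult = (\<lambda>A B. A ** B), one = mat 1\<rparr>"

definition elementary_abelian :: "nat \<Rightarrow> ('a, 'b) monoid_scheme \<Rightarrow> bool" where
  "elementary_abelian p G \<longleftrightarrow> comm_group G \<and> (\<forall>x\<in>carrier G. x [^]\<^bsub>G\<^esub> p = \<one>\<^bsub>G\<^esub>)"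

end

theory Submission
  imports Defs
begin

text \<open>Write the lattice as \<open>L = B \<int>\<^sup>n\<close>. A linear map M takes L to a lattice commensurate with L
  iff \<open>B\<^sup>-\<^sup>1 M B\<close> and \<open>B\<^sup>-\<^sup>1 M\<^sup>-\<^sup>1 B\<close> are rational matrices. Hence \<open>R \<in> SOS(L)\<close> iff some
  positive multiple \<open>\<alpha> R\<close> has this property, and \<open>R \<in> SOC(L)\<close> iff \<open>\<alpha> = 1\<close> works; the scale \<open>\<alpha>\<close>
  is multiplicative and determined up to a rational factor. So commutators have rational scale
  and lie in \<open>SOC(L)\<close>; since \<open>det (\<alpha> R) = \<alpha>\<^sup>n\<close> is rational, so do n-th powers. Thus the
  quotient is abelian of exponent dividing n.\<close>

section \<open>Lattices spanned by a basis\<close>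

definition int_vec :: "int^'n \<Rightarrow> real^'n" where
  "int_vec z = (\<chi> i. real_of_int (z $ i))"

definition lattice_of :: "real^'n^'n \<Rightarrow> (real^'n) set" where
  "lattice_of B = range (\<lambda>z. B *v int_vec z)"

lemma is_lattice_iff_lattice_of: "is_lattice L \<longleftrightarrow> (\<exists>B. invertible B \<and> L = lattice_of B)"
  by (simp add: is_lattice_def lattice_of_def int_vec_def)

lemma int_vec_zero: "int_vec 0 = 0"
  by (simp add: int_vec_def vec_eq_iff)

lemma int_vec_add: "int_vec (z + w) = int_vec z + int_vec w"
  by (simp add: int_vec_def vec_eq_iff)

lemma int_vec_uminus: "int_vec (- z) = - int_vec z"
  by (simp add: int_vec_def vec_eq_iff)

lemma int_vec_axis: "int_vec (axis j 1) = axis j 1"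
  by (simp add: int_vec_def vec_eq_iff axis_def)

lemma int_vec_mod_div:
  "int_vec z = int_vec (\<chi> i. z $ i mod int N) + of_nat N *\<^sub>R int_vec (\<chi> i. z $ i div int N)"
proof -
  have "real_of_int (z $ i) = real_of_int (z $ i mod int N) + real N * real_of_int (z $ i div int N)"
    for i
    by (metis mod_mult_div_eq of_int_add of_int_mult of_int_of_nat_eq)
  then show ?thesis
    by (simp add: int_vec_def vec_eq_iff)
qed

lemma lattice_of_add: "x \<in> lattice_of B \<Longrightarrow> y \<in> lattice_of B \<Longrightarrow> x + y \<in> lattice_of B"
  unfolding lattice_of_def
  by (auto intro!: image_eqI[where x="_ + _"] simp: int_vec_add matrix_vector_right_distrib)

lemma lattice_of_uminus: "x \<in> lattice_of B \<Longrightarrow> - x \<in> lattice_of B"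
  unfolding lattice_of_def by (auto intro!: image_eqI[where x="- _"] simp: int_vec_uminus vec.neg)

lemma zero_in_lattice_of: "0 \<in> lattice_of B"
  unfolding lattice_of_def by (metis int_vec_zero matrix_vector_mult_0_right rangeI)

lemma lattice_of_scaleR_of_nat: "x \<in> lattice_of B \<Longrightarrow> of_nat k *\<^sub>R x \<in> lattice_of B"
proof (induction k)
  case 0
  then show ?case by (simp add: zero_in_lattice_of)
next
  case (Suc k)
  have "of_nat (Suc k) *\<^sub>R x = x + of_nat k *\<^sub>R x"
    by (simp add: scaleR_add_left)
  with Suc show ?case by (simp add: lattice_of_add)
qed

lemma image_lattice_of: "(\<lambda>x. M *v x) ` lattice_of B = lattice_of (M ** B)"
  unfolding lattice_of_def by (auto simp: matrix_vector_mul_assoc image_image)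

section \<open>Finite index\<close>

lemma finite_index_imp_multiple_mem:
  fixes H A :: "(real^'n) set"
  assumes "finite_index H A" and "0 \<in> H" and multiples: "\<And>k::nat. of_nat k *\<^sub>R x \<in> A"
  shows "\<exists>m::nat. m > 0 \<and> of_nat m *\<^sub>R x \<in> H"
proof -
  define coset where "coset k = (\<lambda>h. of_nat k *\<^sub>R x + h) ` H" for k :: nat
  have "range coset \<subseteq> (\<lambda>x. (\<lambda>h. x + h) ` H) ` A"
    using multiples unfolding coset_def by blast
  with \<open>finite_index H A\<close> have "finite (range coset)"
    unfolding finite_index_def by (rule finite_subset[rotated])
  then have "\<not> inj coset"
    using finite_imageD by blast
  then obtain a b where "a < b" "coset a = coset b"
    unfolding inj_def by (metis linorder_neqE_nat)
  moreover have "of_nat b *\<^sub>R x \<in> coset b"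
    unfolding coset_def using \<open>0 \<in> H\<close> by force
  ultimately obtain h where "h \<in> H" "of_nat b *\<^sub>R x = of_nat a *\<^sub>R x + h"
    unfolding coset_def by auto
  moreover have "of_nat (b - a) *\<^sub>R x = of_nat b *\<^sub>R x - of_nat a *\<^sub>R x"
    using \<open>a < b\<close> by (simp add: of_nat_diff scaleR_diff_left)
  ultimately show ?thesis
    using \<open>a < b\<close> by (intro exI[of _ "b - a"]) simp
qed

lemma coset_eq_if_diff_mem:
  fixes H :: "'a::ab_group_add set"
  assumes add: "\<And>x y. x \<in> H \<Longrightarrow> y \<in> H \<Longrightarrow> x + y \<in> H"
    and uminus: "\<And>x. x \<in> H \<Longrightarrow> - x \<in> H"
    and "x - y \<in> H"
  shows "(\<lambda>h. x + h) ` H = (\<lambda>h. y + h) ` H"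
proof -
  have "(\<lambda>h. x + h) ` H \<subseteq> (\<lambda>h. y + h) ` H" if "x - y \<in> H" for x y
  proof
    fix u assume "u \<in> (\<lambda>h. x + h) ` H"
    then obtain h where "h \<in> H" "u = x + h" by blast
    with add[OF that \<open>h \<in> H\<close>] show "u \<in> (\<lambda>h. y + h) ` H"
      by (intro image_eqI[where x="x - y + h"]) auto
  qed
  with assms(3) uminus[OF assms(3)] show ?thesis
    by (metis equalityI minus_diff_eq)
qed

lemma finite_int_box: "finite {z::int^'n. \<forall>i. z $ i \<in> {0..<N}}"
proof -
  have "{z::int^'n. \<forall>i. z $ i \<in> {0..<N}} \<subseteq> vec_lambda ` PiE UNIV (\<lambda>_. {0..<N})"
  proof
    fix z :: "int^'n" assume "z \<in> {z. \<forall>i. z $ i \<in> {0..<N}}"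
    then show "z \<in> vec_lambda ` PiE UNIV (\<lambda>_. {0..<N})"
      by (intro image_eqI[where x="\<lambda>i. z $ i"]) (auto simp: vec_eq_iff)
  qed
  then show ?thesis
    by (rule finite_subset) (intro finite_imageI finite_PiE; simp)
qed

lemma finite_index_lattice_of_if_multiples_mem:
  fixes H :: "(real^'n) set" and N :: nat
  assumes "N > 0" and multiples: "\<And>x. x \<in> lattice_of B \<Longrightarrow> of_nat N *\<^sub>R x \<in> H"
    and add: "\<And>x y. x \<in> H \<Longrightarrow> y \<in> H \<Longrightarrow> x + y \<in> H"
    and uminus: "\<And>x. x \<in> H \<Longrightarrow> - x \<in> H"
  shows "finite_index H (lattice_of B)"
proof -
  define box where "box = {z::int^'n. \<forall>i. z $ i \<in> {0..<int N}}"
  have "(\<lambda>x. (\<lambda>h. x + h) ` H) ` lattice_of B \<subseteq> (\<lambda>z. (\<lambda>h. B *v int_vec z + h) ` H) ` box"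
  proof
    fix C assume "C \<in> (\<lambda>x. (\<lambda>h. x + h) ` H) ` lattice_of B"
    then obtain z where C: "C = (\<lambda>h. B *v int_vec z + h) ` H"
      unfolding lattice_of_def by blast
    define r where "r = (\<chi> i. z $ i mod int N)"
    define q where "q = (\<chi> i. z $ i div int N)"
    have "B *v int_vec z - B *v int_vec r = of_nat N *\<^sub>R (B *v int_vec q)"
      using int_vec_mod_div[of z N]
      by (simp add: r_def q_def matrix_vector_right_distrib scaleR_matrix_vector_assoc
          matrix_scaleR_vector_ac)
    moreover have "B *v int_vec q \<in> lattice_of B"
      unfolding lattice_of_def by blast
    ultimately have "C = (\<lambda>h. B *v int_vec r + h) ` H"
      using C multiples coset_eq_if_diff_mem[OF add uminus] by metis
    moreover have "r \<in> box"
      unfolding box_def r_def using \<open>N > 0\<close> by simp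
    ultimately show "C \<in> (\<lambda>z. (\<lambda>h. B *v int_vec z + h) ` H) ` box"
      by blast
  qed
  moreover have "finite box"
    unfolding box_def by (rule finite_int_box)
  ultimately show ?thesis
    unfolding finite_index_def by (meson finite_imageI finite_subset)
qed

section \<open>Rational matrices and commensurability\<close>

definition rational_matrix :: "real^'m^'n \<Rightarrow> bool" where
  "rational_matrix A \<longleftrightarrow> (\<forall>i j. A $ i $ j \<in> \<rat>)"

definition integer_matrix :: "real^'m^'n \<Rightarrow> bool" where
  "integer_matrix A \<longleftrightarrow> (\<forall>i j. A $ i $ j \<in> \<int>)"

lemma rational_matrix_mult: "rational_matrix A \<Longrightarrow> rational_matrix C \<Longrightarrow> rational_matrix (A ** C)"
  unfolding rational_matrix_def by (auto simp: matrix_matrix_mult_def intro!: Rats_sum Rats_mult)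

lemma rational_matrix_scaleR: "q \<in> \<rat> \<Longrightarrow> rational_matrix A \<Longrightarrow> rational_matrix (q *\<^sub>R A)"
  unfolding rational_matrix_def by (auto intro!: Rats_mult)

lemma rational_matrix_mat_1: "rational_matrix (mat 1)"
  unfolding rational_matrix_def by (auto simp: mat_def)

lemma det_rational: "rational_matrix A \<Longrightarrow> det A \<in> \<rat>"
  unfolding rational_matrix_def det_def by (auto intro!: Rats_sum Rats_mult Rats_prod)

lemma det_scaleR: "det (a *\<^sub>R (A::real^'n^'n)) = a ^ CARD('n) * det A"
  unfolding det_def by (simp add: prod.distrib sum_distrib_left mult_ac)

lemma rational_matrix_imp_integer_multiple:
  fixes A :: "real^'m^'n"
  assumes "rational_matrix A"
  shows "\<exists>N::nat. N > 0 \<and> integer_matrix (of_nat N *\<^sub>R A)"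
proof -
  have "\<exists>d::nat. d > 0 \<and> of_nat d * A $ fst ij $ snd ij \<in> \<int>" for ij :: "'n \<times> 'm"
  proof -
    obtain a b where "0 < b" "A $ fst ij $ snd ij = of_int a / of_int b"
      using assms unfolding rational_matrix_def by (metis Rats_cases')
    then show ?thesis
      by (intro exI[of _ "nat b"]) auto
  qed
  then obtain d where d: "\<And>ij. d ij > 0 \<and> of_nat (d ij) * A $ fst ij $ snd ij \<in> \<int>"
    by metis
  define N where "N = (\<Prod>ij\<in>UNIV. d ij)"
  have "integer_matrix (of_nat N *\<^sub>R A)"
    unfolding integer_matrix_def
  proof (intro allI)
    fix i j
    obtain k where k: "N = d (i, j) * k"
      unfolding N_def by (metis dvd_prodI finite iso_tuple_UNIV_I dvdE)
    have "(of_nat N *\<^sub>R A) $ i $ j = of_nat k * (of_nat (d (i, j)) * A $ i $ j)"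
      by (simp add: k)
    also have "\<dots> \<in> \<int>"
      using d[of "(i, j)"] by simp
    finally show "(of_nat N *\<^sub>R A) $ i $ j \<in> \<int>" .
  qed
  moreover have "N > 0"
    unfolding N_def using d by (simp add: prod_pos)
  ultimately show ?thesis by blast
qed

lemma integer_matrix_mult_int_vec:
  assumes "integer_matrix A"
  shows "\<exists>w. A *v int_vec z = int_vec w"
proof -
  have "(A *v int_vec z) $ i \<in> \<int>" for i
    using assms unfolding integer_matrix_def matrix_vector_mult_def int_vec_def
    by (auto intro!: Ints_sum Ints_mult)
  then have "A *v int_vec z = int_vec (\<chi> i. \<lfloor>(A *v int_vec z) $ i\<rfloor>)"
    by (simp add: int_vec_def vec_eq_iff)
  then show ?thesis ..
qed

lemma rational_matrix_if_columns_integral_multiples: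
  assumes "\<And>j. \<exists>m::nat. m > 0 \<and> (\<exists>w. of_nat m *\<^sub>R (A *v axis j 1) = int_vec w)"
  shows "rational_matrix A"
  unfolding rational_matrix_def
proof (intro allI)
  fix i j
  obtain m w where "m > 0" and w: "of_nat m *\<^sub>R (A *v axis j 1) = int_vec w"
    using assms by blast
  have "of_nat m * A $ i $ j = of_int (w $ i)"
    using arg_cong[OF w, of "\<lambda>v. v $ i"]
    by (simp add: matrix_vector_mult_basis column_def int_vec_def)
  then have "A $ i $ j = of_int (w $ i) / of_nat m"
    using \<open>m > 0\<close> by (simp add: field_simps)
  then show "A $ i $ j \<in> \<rat>" by simp
qed

lemma rational_matrix_if_finite_index:
  assumes "Bi ** B = mat 1" and "finite_index (lattice_of B \<inter> lattice_of C) (lattice_of C)"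
  shows "rational_matrix (Bi ** C)"
proof (rule rational_matrix_if_columns_integral_multiples)
  fix j
  have "of_nat k *\<^sub>R (C *v axis j 1) \<in> lattice_of C" for k :: nat
    by (intro lattice_of_scaleR_of_nat) (metis lattice_of_def int_vec_axis rangeI)
  then obtain m :: nat where "m > 0" and "of_nat m *\<^sub>R (C *v axis j 1) \<in> lattice_of B"
    using finite_index_imp_multiple_mem[OF assms(2)] zero_in_lattice_of by blast
  then obtain w where w: "of_nat m *\<^sub>R (C *v axis j 1) = B *v int_vec w"
    unfolding lattice_of_def by blast
  have "of_nat m *\<^sub>R ((Bi ** C) *v axis j 1) = Bi *v (of_nat m *\<^sub>R (C *v axis j 1))"
    by (simp add: matrix_vector_mul_assoc matrix_vector_mult_scaleR)
  also have "\<dots> = int_vec w"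
    by (simp add: w matrix_vector_mul_assoc assms(1))
  finally show "\<exists>m::nat. m > 0 \<and> (\<exists>w. of_nat m *\<^sub>R ((Bi ** C) *v axis j 1) = int_vec w)"
    using \<open>m > 0\<close> by blast
qed

lemma finite_index_if_rational_matrix:
  assumes "B ** Bi = mat 1" and "rational_matrix (Bi ** C)"
  shows "finite_index (lattice_of B \<inter> lattice_of C) (lattice_of C)"
proof -
  obtain N :: nat where "N > 0" and N: "integer_matrix (of_nat N *\<^sub>R (Bi ** C))"
    using rational_matrix_imp_integer_multiple[OF assms(2)] by blast
  show ?thesis
  proof (rule finite_index_lattice_of_if_multiples_mem[OF \<open>N > 0\<close>])
    fix x assume "x \<in> lattice_of C"
    then obtain z where x: "x = C *v int_vec z"
      unfolding lattice_of_def by blast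
    obtain w where w: "(of_nat N *\<^sub>R (Bi ** C)) *v int_vec z = int_vec w"
      using integer_matrix_mult_int_vec[OF N] by blast
    have "of_nat N *\<^sub>R x = B *v ((of_nat N *\<^sub>R (Bi ** C)) *v int_vec z)"
      by (simp add: x matrix_vector_mult_scaleR matrix_vector_mul_assoc matrix_mul_assoc assms(1)
        flip: scaleR_matrix_vector_assoc)
    then have "of_nat N *\<^sub>R x \<in> lattice_of B"
      unfolding w lattice_of_def by blast
    with \<open>x \<in> lattice_of C\<close> show "of_nat N *\<^sub>R x \<in> lattice_of B \<inter> lattice_of C"
      by (simp add: lattice_of_scaleR_of_nat)
  qed (auto intro: lattice_of_add lattice_of_uminus)
qed

lemma commensurate_lattice_of_iff:
  assumes "B ** Bi = mat 1" "Bi ** B = mat 1" and "C ** Ci = mat 1" "Ci ** C = mat 1"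
  shows "commensurate (lattice_of B) (lattice_of C) \<longleftrightarrow>
    rational_matrix (Bi ** C) \<and> rational_matrix (Ci ** B)"
  using rational_matrix_if_finite_index[OF assms(2)] finite_index_if_rational_matrix[OF assms(1)]
    rational_matrix_if_finite_index[OF assms(4)] finite_index_if_rational_matrix[OF assms(3)]
  unfolding commensurate_def by (metis Int_commute)

section \<open>Abelian quotients of finite exponent\<close>

lemma (in normal) comm_group_FactGroupI:
  assumes commutator: "\<And>a b. a \<in> carrier G \<Longrightarrow> b \<in> carrier G \<Longrightarrow> a \<otimes> b \<otimes> inv (b \<otimes> a) \<in> H"
  shows "comm_group (G Mod H)"
proof (rule group.group_comm_groupI[OF factorgroup_is_group])
  fix X Y assume "X \<in> carrier (G Mod H)" "Y \<in> carrier (G Mod H)"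
  then obtain a b where XY: "X = H #> a" "Y = H #> b" and ab: "a \<in> carrier G" "b \<in> carrier G"
    unfolding carrier_FactGroup by (elim imageE)
  have "(a \<otimes> b \<otimes> inv (b \<otimes> a)) \<otimes> (b \<otimes> a) = a \<otimes> b \<otimes> (inv (b \<otimes> a) \<otimes> (b \<otimes> a))"
    using ab by (intro m_assoc) auto
  also have "\<dots> = a \<otimes> b"
    using ab by simp
  finally have "a \<otimes> b \<in> H #> (b \<otimes> a)"
    using rcosI[OF commutator[OF ab] subset m_closed[OF ab(2,1)]] by simp
  then have "H #> (b \<otimes> a) = H #> (a \<otimes> b)"
    by (rule repr_independence) (simp_all add: ab subgroup_axioms)
  moreover have "X \<otimes>\<^bsub>G Mod H\<^esub> Y = H #> (a \<otimes> b)" "Y \<otimes>\<^bsub>G Mod H\<^esub> X = H #> (b \<otimes> a)"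
    unfolding XY FactGroup_def using ab by (simp_all add: rcos_sum)
  ultimately show "X \<otimes>\<^bsub>G Mod H\<^esub> Y = Y \<otimes>\<^bsub>G Mod H\<^esub> X"
    by simp
qed

lemma (in normal) FactGroup_nat_pow_eq_one:
  fixes n :: nat
  assumes "\<And>a. a \<in> carrier G \<Longrightarrow> a [^] n \<in> H" and "X \<in> carrier (G Mod H)"
  shows "X [^]\<^bsub>G Mod H\<^esub> n = \<one>\<^bsub>G Mod H\<^esub>"
proof -
  from assms(2) obtain a where X: "X = H #> a" and a: "a \<in> carrier G"
    unfolding carrier_FactGroup by (elim imageE)
  have "X [^]\<^bsub>G Mod H\<^esub> n = H #> (a [^] n)"
    unfolding X by (rule FactGroup_pow[OF a])
  also have "\<dots> = H"
    by (rule rcos_const[OF is_group assms(1)[OF a]])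
  finally show ?thesis
    by simp
qed

section \<open>The groups SOS and SOC\<close>

lemma SO_mat_1: "mat 1 \<in> SO"
  unfolding SO_def by (simp add: orthogonal_matrix_id)

lemma SO_mult: "R \<in> SO \<Longrightarrow> S \<in> SO \<Longrightarrow> R ** S \<in> SO"
  unfolding SO_def by (simp add: orthogonal_matrix_mul det_mul)

lemma SO_transpose: "R \<in> SO \<Longrightarrow> transpose R \<in> SO"
  unfolding SO_def by simp

lemma SO_transpose_mult: "R \<in> SO \<Longrightarrow> transpose R ** R = mat 1"
  unfolding SO_def orthogonal_matrix_def by simp

lemma SO_mult_transpose: "R \<in> SO \<Longrightarrow> R ** transpose R = mat 1"
  unfolding SO_def orthogonal_matrix_def by simp

lemma SOS_subset_SO: "SOS L \<subseteq> SO"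
  unfolding SOS_def by blast

lemma SOS_group_simps [simp]:
  "carrier (SOS_group L) = SOS L"
  "A \<otimes>\<^bsub>SOS_group L\<^esub> C = A ** C"
  "\<one>\<^bsub>SOS_group L\<^esub> = mat 1"
  by (simp_all add: SOS_group_def)

locale lattice_basis =
  fixes B Bi :: "real^'n^'n"
  assumes right_inverse: "B ** Bi = mat 1" and left_inverse: "Bi ** B = mat 1"
begin

definition rational_in_basis :: "real^'n^'n \<Rightarrow> bool" where
  "rational_in_basis M \<longleftrightarrow> rational_matrix (Bi ** M ** B)"

lemma rational_in_basis_mult:
  "rational_in_basis M \<Longrightarrow> rational_in_basis M' \<Longrightarrow> rational_in_basis (M ** M')"
  unfolding rational_in_basis_def
  by (metis rational_matrix_mult matrix_mul_assoc matrix_mul_rid right_inverse)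

lemma rational_in_basis_scaleR: "q \<in> \<rat> \<Longrightarrow> rational_in_basis M \<Longrightarrow> rational_in_basis (q *\<^sub>R M)"
  unfolding rational_in_basis_def
  by (metis rational_matrix_scaleR matrix_scalar_ac scalar_matrix_assoc)

lemma rational_in_basis_mat_1: "rational_in_basis (mat 1)"
  unfolding rational_in_basis_def by (simp add: left_inverse rational_matrix_mat_1)

lemma det_rational_if_rational_in_basis:
  assumes "rational_in_basis M"
  shows "det M \<in> \<rat>"
proof -
  have "det (Bi ** M ** B) = det (Bi ** B) * det M"
    unfolding det_mul by simp
  with det_rational[OF assms[unfolded rational_in_basis_def]] show ?thesis
    by (simp add: left_inverse)
qed

lemma commensurate_image_iff:
  assumes "M ** M' = mat 1" "M' ** M = mat 1"
  shows "commensurate (lattice_of B) ((\<lambda>x. M *v x) ` lattice_of B) \<longleftrightarrow>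
    rational_in_basis M \<and> rational_in_basis M'"
proof -
  have "(M ** B) ** (Bi ** M') = mat 1" "(Bi ** M') ** (M ** B) = mat 1"
    by (metis assms matrix_mul_assoc matrix_mul_rid right_inverse left_inverse)+
  from commensurate_lattice_of_iff[OF right_inverse left_inverse this] show ?thesis
    unfolding image_lattice_of rational_in_basis_def by (simp add: matrix_mul_assoc)
qed

text \<open>For a rotation R the two matrices are mutually inverse, so this says that the lattice is
  commensurate with its image under \<alpha> R.\<close>
definition rational_scaling :: "real \<Rightarrow> real^'n^'n \<Rightarrow> bool" where
  "rational_scaling \<alpha> R \<longleftrightarrow>
    rational_in_basis (\<alpha> *\<^sub>R R) \<and> rational_in_basis ((1 / \<alpha>) *\<^sub>R transpose R)"

lemma rational_scaling_mult:
  assumes "rational_scaling \<alpha> R" "rational_scaling \<beta> S"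
  shows "rational_scaling (\<alpha> * \<beta>) (R ** S)"
proof -
  have "(\<alpha> * \<beta>) *\<^sub>R (R ** S) = (\<alpha> *\<^sub>R R) ** (\<beta> *\<^sub>R S)"
    by (simp add: matrix_scalar_ac scalar_matrix_assoc ac_simps)
  moreover have "(1 / (\<alpha> * \<beta>)) *\<^sub>R transpose (R ** S) =
      ((1 / \<beta>) *\<^sub>R transpose S) ** ((1 / \<alpha>) *\<^sub>R transpose R)"
    by (simp add: matrix_scalar_ac scalar_matrix_assoc matrix_transpose_mul mult.commute)
  ultimately show ?thesis
    using assms unfolding rational_scaling_def by (simp add: rational_in_basis_mult)
qed

lemma rational_scaling_transpose: "rational_scaling \<alpha> R \<Longrightarrow> rational_scaling (1 / \<alpha>) (transpose R)"
  unfolding rational_scaling_def by simp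

lemma rational_scaling_rescale:
  assumes "rational_scaling \<alpha> R" "q \<in> \<rat>"
  shows "rational_scaling (q * \<alpha>) R"
proof -
  from assms have "rational_in_basis (q *\<^sub>R (\<alpha> *\<^sub>R R))"
    "rational_in_basis ((1 / q) *\<^sub>R ((1 / \<alpha>) *\<^sub>R transpose R))"
    unfolding rational_scaling_def by (meson rational_in_basis_scaleR Rats_1 Rats_divide)+
  then show ?thesis
    unfolding rational_scaling_def by simp
qed

lemma rational_scaling_mat_1: "rational_scaling 1 (mat 1)"
  unfolding rational_scaling_def by (simp add: rational_in_basis_mat_1)

lemma rational_scaling_power_card:
  assumes "rational_scaling \<alpha> R" "det R = 1"
  shows "\<alpha> ^ CARD('n) \<in> \<rat>"
  using assms det_rational_if_rational_in_basis[of "\<alpha> *\<^sub>R R"]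
  unfolding rational_scaling_def by (simp add: det_scaleR)

lemma rational_scaling_nat_pow:
  assumes "rational_scaling \<alpha> R"
  shows "rational_scaling (\<alpha> ^ k) (R [^]\<^bsub>SOS_group L\<^esub> k)"
proof (induction k)
  case (Suc k)
  then show ?case
    using rational_scaling_mult[OF Suc assms] by (simp add: mult.commute)
qed (simp add: rational_scaling_mat_1)

lemma commensurate_scaled_image_iff:
  assumes "R \<in> SO" "\<alpha> \<noteq> 0"
  shows "commensurate (lattice_of B) ((\<lambda>x. \<alpha> *\<^sub>R (R *v x)) ` lattice_of B) \<longleftrightarrow> rational_scaling \<alpha> R"
proof -
  have "(\<alpha> *\<^sub>R R) ** ((1 / \<alpha>) *\<^sub>R transpose R) = mat 1"
    "((1 / \<alpha>) *\<^sub>R transpose R) ** (\<alpha> *\<^sub>R R) = mat 1"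
    using assms SO_mult_transpose SO_transpose_mult by (simp_all add: matrix_scalar_ac)
  from commensurate_image_iff[OF this] show ?thesis
    unfolding rational_scaling_def by (simp add: scaleR_matrix_vector_assoc)
qed

lemma mem_SOS_iff: "R \<in> SOS (lattice_of B) \<longleftrightarrow> R \<in> SO \<and> (\<exists>\<alpha>>0. rational_scaling \<alpha> R)"
  unfolding SOS_def using commensurate_scaled_image_iff by auto

lemma mem_SOC_iff: "R \<in> SOC (lattice_of B) \<longleftrightarrow> R \<in> SO \<and> rational_scaling 1 R"
  unfolding SOC_def using commensurate_scaled_image_iff[of _ 1] by auto

lemma transpose_mem_SOS:
  assumes "R \<in> SOS (lattice_of B)"
  shows "transpose R \<in> SOS (lattice_of B)"
proof -
  obtain \<alpha> where "R \<in> SO" "\<alpha> > 0" "rational_scaling \<alpha> R"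
    using assms unfolding mem_SOS_iff by blast
  then show ?thesis
    unfolding mem_SOS_iff
    by (intro conjI exI[of _ "1 / \<alpha>"]) (simp_all add: SO_transpose rational_scaling_transpose)
qed

lemma mult_mem_SOS:
  assumes "R \<in> SOS (lattice_of B)" "S \<in> SOS (lattice_of B)"
  shows "R ** S \<in> SOS (lattice_of B)"
proof -
  obtain \<alpha> \<beta> where "R \<in> SO" "\<alpha> > 0" "rational_scaling \<alpha> R" "S \<in> SO" "\<beta> > 0" "rational_scaling \<beta> S"
    using assms unfolding mem_SOS_iff by blast
  then show ?thesis
    unfolding mem_SOS_iff
    by (intro conjI exI[of _ "\<alpha> * \<beta>"]) (simp_all add: SO_mult rational_scaling_mult)
qed

lemma group_SOS_group: "group (SOS_group (lattice_of B))"
proof (rule groupI)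
  have "mat 1 \<in> SOS (lattice_of B)"
    unfolding mem_SOS_iff using SO_mat_1 rational_scaling_mat_1 by (intro conjI exI[of _ 1]) auto
  then show "\<one>\<^bsub>SOS_group (lattice_of B)\<^esub> \<in> carrier (SOS_group (lattice_of B))"
    by simp
next
  fix R assume "R \<in> carrier (SOS_group (lattice_of B))"
  then have "R \<in> SOS (lattice_of B)"
    by simp
  moreover from this have "R \<in> SO"
    using SOS_subset_SO by blast
  ultimately have "transpose R \<in> SOS (lattice_of B)" "transpose R ** R = mat 1"
    by (simp_all add: transpose_mem_SOS SO_transpose_mult)
  then show "\<exists>S \<in> carrier (SOS_group (lattice_of B)).
      S \<otimes>\<^bsub>SOS_group (lattice_of B)\<^esub> R = \<one>\<^bsub>SOS_group (lattice_of B)\<^esub>"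
    by auto
qed (simp_all add: mult_mem_SOS matrix_mul_assoc)

lemma inv_SOS_group:
  assumes "R \<in> SOS (lattice_of B)"
  shows "inv\<^bsub>SOS_group (lattice_of B)\<^esub> R = transpose R"
proof (rule group.inv_equality[OF group_SOS_group])
  have "R \<in> SO"
    using assms SOS_subset_SO by blast
  then show "transpose R \<otimes>\<^bsub>SOS_group (lattice_of B)\<^esub> R = \<one>\<^bsub>SOS_group (lattice_of B)\<^esub>"
    by (simp add: SO_transpose_mult)
qed (simp_all add: assms transpose_mem_SOS)

lemma SOC_subset_SOS: "SOC (lattice_of B) \<subseteq> SOS (lattice_of B)"
  unfolding SOC_def SOS_def by (auto intro: exI[of _ 1])

lemma transpose_mem_SOC: "R \<in> SOC (lattice_of B) \<Longrightarrow> transpose R \<in> SOC (lattice_of B)"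
  using SO_transpose rational_scaling_transpose[of 1 R] unfolding mem_SOC_iff by auto

lemma mult_mem_SOC:
  "R \<in> SOC (lattice_of B) \<Longrightarrow> S \<in> SOC (lattice_of B) \<Longrightarrow> R ** S \<in> SOC (lattice_of B)"
  using SO_mult rational_scaling_mult[of 1 R 1 S] unfolding mem_SOC_iff by auto

lemma conj_mem_SOC:
  assumes "R \<in> SOS (lattice_of B)" "S \<in> SOC (lattice_of B)"
  shows "R ** S ** transpose R \<in> SOC (lattice_of B)"
proof -
  obtain \<alpha> where "R \<in> SO" "\<alpha> > 0" and R: "rational_scaling \<alpha> R"
    using assms(1) unfolding mem_SOS_iff by blast
  moreover have "S \<in> SO" and S: "rational_scaling 1 S"
    using assms(2) unfolding mem_SOC_iff by blast+
  moreover have "rational_scaling (\<alpha> * 1 * (1 / \<alpha>)) (R ** S ** transpose R)"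
    by (intro rational_scaling_mult rational_scaling_transpose R S)
  ultimately show ?thesis
    unfolding mem_SOC_iff by (auto intro: SO_mult SO_transpose)
qed

lemma normal_SOC: "SOC (lattice_of B) \<lhd> SOS_group (lattice_of B)"
proof -
  interpret group "SOS_group (lattice_of B)"
    by (rule group_SOS_group)
  have "subgroup (SOC (lattice_of B)) (SOS_group (lattice_of B))"
  proof (rule subgroupI)
    show "SOC (lattice_of B) \<noteq> {}"
      using SO_mat_1 rational_scaling_mat_1 mem_SOC_iff by blast
  qed (use SOC_subset_SOS in \<open>auto simp: inv_SOS_group transpose_mem_SOC mult_mem_SOC\<close>)
  then show ?thesis
    unfolding normal_inv_iff using SOC_subset_SOS by (auto simp: inv_SOS_group conj_mem_SOC)
qed

lemma commutator_mem_SOC: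
  assumes "R \<in> SOS (lattice_of B)" "S \<in> SOS (lattice_of B)"
  shows "R ** S ** transpose (S ** R) \<in> SOC (lattice_of B)"
proof -
  obtain \<alpha> \<beta> where "\<alpha> > 0" "\<beta> > 0" "rational_scaling \<alpha> R" "rational_scaling \<beta> S"
    using assms unfolding mem_SOS_iff by blast
  then have "rational_scaling (\<alpha> * \<beta> * (1 / (\<beta> * \<alpha>))) (R ** S ** transpose (S ** R))"
    by (intro rational_scaling_mult rational_scaling_transpose)
  moreover have "\<alpha> * \<beta> * (1 / (\<beta> * \<alpha>)) = 1"
    using \<open>\<alpha> > 0\<close> \<open>\<beta> > 0\<close> by simp
  moreover have "R \<in> SO" "S \<in> SO"
    using assms unfolding mem_SOS_iff by blast+
  ultimately show ?thesis
    unfolding mem_SOC_iff by (auto intro: SO_mult SO_transpose)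
qed

lemma nat_pow_card_mem_SOC:
  assumes "R \<in> SOS (lattice_of B)"
  shows "R [^]\<^bsub>SOS_group (lattice_of B)\<^esub> CARD('n) \<in> SOC (lattice_of B)"
proof -
  let ?n = "CARD('n)" and ?Rn = "R [^]\<^bsub>SOS_group (lattice_of B)\<^esub> CARD('n)"
  obtain \<alpha> where "R \<in> SO" "\<alpha> > 0" "rational_scaling \<alpha> R"
    using assms unfolding mem_SOS_iff by blast
  then have "\<alpha> ^ ?n \<in> \<rat>"
    using rational_scaling_power_card SO_def by blast
  then have "rational_scaling (1 / \<alpha> ^ ?n * \<alpha> ^ ?n) ?Rn"
    by (intro rational_scaling_rescale rational_scaling_nat_pow \<open>rational_scaling \<alpha> R\<close>) simp
  moreover have "?Rn \<in> SOS (lattice_of B)"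
    using monoid.nat_pow_closed[OF group.is_monoid[OF group_SOS_group]] assms by simp
  ultimately show ?thesis
    using \<open>\<alpha> > 0\<close> unfolding mem_SOS_iff mem_SOC_iff by simp
qed

end

theorem mainTheorem4:
  fixes L :: "(real^'n) set" and p :: nat
  assumes "prime p" and "CARD('n) = p" and "is_lattice L"
  shows "elementary_abelian p (SOS_group L Mod SOC L)"
proof -
  obtain B :: "real^'n^'n" where "invertible B" and L: "L = lattice_of B"
    using assms(3) unfolding is_lattice_iff_lattice_of by blast
  then obtain Bi where "B ** Bi = mat 1" "Bi ** B = mat 1"
    unfolding invertible_def by blast
  then interpret lattice_basis B Bi
    by unfold_locales
  interpret normal "SOC L" "SOS_group L"
    unfolding L by (rule normal_SOC)
  have "comm_group (SOS_group L Mod SOC L)"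
    by (rule comm_group_FactGroupI)
      (simp add: L mult_mem_SOS inv_SOS_group commutator_mem_SOC)
  moreover have "X [^]\<^bsub>SOS_group L Mod SOC L\<^esub> p = \<one>\<^bsub>SOS_group L Mod SOC L\<^esub>"
    if "X \<in> carrier (SOS_group L Mod SOC L)" for X
    using nat_pow_card_mem_SOC assms(2) by (intro FactGroup_nat_pow_eq_one[OF _ that]) (simp add: L)
  ultimately show ?thesis
    unfolding elementary_abelian_def by blast
qed

end
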